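(* For every fixed $\beta>0$, the function $\lambda\mapsto UB(\beta,\lambda)$ is strictly decreasing on $(0,\infty)$.
   Context: $\phi$ and $\Phi$ denote the standard normal density and distribution function. For $\lambda>0$ and $\beta\ge 0$ set $n=\lambda+\beta\sqrt{\lambda}$, $\rho=\lambda/n$, $a=\sqrt{-2n(1-\rho+\ln\rho)}$ (note $1-\rho+\ln\rho\le 0$), and $\gamma=(n-\lambda)/\sqrt{n}=\beta\sqrt{\rho}$. Define $UB(\beta,\lambda)=\left[\rho+\gamma\left(\frac{\Phi(a)}{\phi(a)}+\frac{2}{3\sqrt{n}}\right)\right]^{-1}$. *)

theory Defs
  imports "HOL-Probability.Probability"
begin

definition std_normal_cdf :: "real \<Rightarrow> real" where
  "std_normal_cdf x = (LBINT t:{..x}. std_normal_density t)"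

definition UB :: "real \<Rightarrow> real \<Rightarrow> real" where
  "UB \<beta> lam =
    (let n = lam + \<beta> * sqrt lam;
         \<rho> = lam / n;
         a = sqrt (- 2 * n * (1 - \<rho> + ln \<rho>));
         \<gamma> = (n - lam) / sqrt n
     in inverse (\<rho> + \<gamma> * (std_normal_cdf a / std_normal_density a + 2 / (3 * sqrt n))))"

end

theory Submission imports Defs begin

text \<open>Substitute \<open>t = sqrt \<lambda>\<close>. Then \<open>n = t (t + \<beta>)\<close>, \<open>\<rho> = t / (t + \<beta>)\<close>,
  \<open>\<gamma> = \<beta> sqrt \<rho>\<close>, \<open>\<gamma> \<cdot> 2 / (3 sqrt n) = 2\<beta> / (3 (t + \<beta>))\<close> and
  \<open>a\<^sup>2 / 2 = t (t + \<beta>) ln ((t + \<beta>) / t) - \<beta> t\<close>, so \<open>1 / UB\<close> is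
  \<open>1 - \<beta> / (3 (t + \<beta>)) + \<beta> sqrt \<rho> \<cdot> \<Phi>(a) / \<phi>(a)\<close>.  The first summand is strictly
  increasing in \<open>t\<close>, and so are (weakly) \<open>\<rho>\<close>, \<open>a\<close> and the ratio \<open>\<Phi>/\<phi>\<close> on \<open>[0, \<infinity>)\<close>;
  all factors are nonnegative, hence \<open>1 / UB\<close> is strictly increasing and positive.\<close>

lemma std_normal_density_pos: "0 < std_normal_density x"
  by (rule normal_density_pos) simp

lemma std_normal_density_antimono:
  assumes "0 \<le> x" "x \<le> y"
  shows "std_normal_density y \<le> std_normal_density x"
proof -
  have "x\<^sup>2 \<le> y\<^sup>2" using assms by (intro power_mono) auto
  then show ?thesis unfolding std_normal_density_def by (simp add: divide_right_mono)
qed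

lemma std_normal_cdf_nonneg: "0 \<le> std_normal_cdf x"
  unfolding std_normal_cdf_def set_lebesgue_integral_def
  by (rule integral_nonneg_AE) (auto simp: indicator_def)

lemma std_normal_cdf_mono:
  assumes "x \<le> y"
  shows "std_normal_cdf x \<le> std_normal_cdf y"
proof -
  have "integrable lborel std_normal_density"
    using integrable_std_normal_moment[of 0] by simp
  then have "integrable lborel (\<lambda>t. indicat_real {..z} t *\<^sub>R std_normal_density t)" for z
    by (intro integrable_mult_indicator) auto
  then show ?thesis
    unfolding std_normal_cdf_def set_lebesgue_integral_def
    using assms by (intro integral_mono) (auto simp: indicator_def)
qed

lemma std_normal_cdf_div_density_mono:
  assumes "0 \<le> x" "x \<le> y"
  shows "std_normal_cdf x / std_normal_density x \<le> std_normal_cdf y / std_normal_density y"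
proof -
  have "std_normal_cdf x / std_normal_density x \<le> std_normal_cdf y / std_normal_density x"
    using std_normal_cdf_mono[OF assms(2)] std_normal_density_pos[of x]
    by (simp add: divide_right_mono)
  also have "\<dots> \<le> std_normal_cdf y / std_normal_density y"
    using std_normal_density_antimono[OF assms] std_normal_density_pos[of y] std_normal_cdf_nonneg[of y]
    by (intro divide_left_mono) auto
  finally show ?thesis .
qed

lemma std_normal_cdf_div_density_nonneg: "0 \<le> std_normal_cdf x / std_normal_density x"
  using std_normal_cdf_nonneg std_normal_density_pos by (simp add: less_imp_le)

lemma ln_ge_two_diff_div_sum:
  fixes s :: real
  assumes "1 \<le> s"
  shows "2 * (s - 1) / (s + 1) \<le> ln s"
proof -
  let ?h = "\<lambda>s. ln s - 2 * (s - 1) / (s + 1)"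
  have "?h 1 \<le> ?h s"
  proof (rule DERIV_nonneg_imp_nondecreasing[OF assms])
    fix x :: real assume x: "1 \<le> x"
    have "DERIV ?h x :> 1 / x - 4 / (x + 1)\<^sup>2"
      using x by (auto intro!: derivative_eq_intros simp: power2_eq_square field_simps)
    moreover have "4 * x \<le> (x + 1)\<^sup>2"
      using zero_le_power2[of "x - 1"] by (simp add: power2_eq_square algebra_simps)
    then have "4 / (x + 1)\<^sup>2 \<le> 1 / x" using x by (simp add: divide_simps)
    ultimately show "\<exists>y. DERIV ?h x :> y \<and> y \<ge> 0" by auto
  qed
  then show ?thesis by simp
qed

lemma ln_add_diff_ge:
  fixes t b :: real
  assumes "0 < t" "0 < b"
  shows "2 * b / (2 * t + b) \<le> ln (t + b) - ln t"
proof -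
  have "2 * ((t + b) / t - 1) / ((t + b) / t + 1) \<le> ln ((t + b) / t)"
    using assms by (intro ln_ge_two_diff_div_sum) simp
  moreover have "2 * ((t + b) / t - 1) / ((t + b) / t + 1) = 2 * b / (2 * t + b)"
    using assms by (simp add: field_simps)
  ultimately show ?thesis using assms by (simp add: ln_div)
qed

definition UB_exponent :: "real \<Rightarrow> real \<Rightarrow> real" where
  "UB_exponent b t = t * (t + b) * (ln (t + b) - ln t) - b * t"

lemma UB_exponent_nonneg:
  assumes "0 < t" "0 < b"
  shows "0 \<le> UB_exponent b t"
proof -
  have "b / (t + b) \<le> 2 * b / (2 * t + b)" using assms by (simp add: field_simps)
  then have "b / (t + b) \<le> ln (t + b) - ln t" using ln_add_diff_ge[OF assms] by linarith
  then have "t * (t + b) * (b / (t + b)) \<le> t * (t + b) * (ln (t + b) - ln t)"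
    using assms by (intro mult_left_mono) auto
  then show ?thesis using assms unfolding UB_exponent_def by simp
qed

lemma UB_exponent_mono:
  assumes "0 < t1" "t1 \<le> t2" "0 < b"
  shows "UB_exponent b t1 \<le> UB_exponent b t2"
proof (rule DERIV_nonneg_imp_nondecreasing[OF assms(2)])
  fix x :: real assume "t1 \<le> x"
  then have x: "0 < x" using assms by simp
  have "x * (x + b) * (1 / (x + b) - 1 / x) = - b"
    using x assms by (simp add: right_diff_distrib)
  then have "DERIV (UB_exponent b) x :> (2 * x + b) * (ln (x + b) - ln x) - 2 * b"
    unfolding UB_exponent_def[abs_def] using x assms
    by (auto intro!: derivative_eq_intros simp: algebra_simps)
  moreover have "(2 * x + b) * (2 * b / (2 * x + b)) \<le> (2 * x + b) * (ln (x + b) - ln x)"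
    using x assms ln_add_diff_ge[OF x assms(3)] by (intro mult_left_mono) auto
  then have "0 \<le> (2 * x + b) * (ln (x + b) - ln x) - 2 * b" using x assms by simp
  ultimately show "\<exists>y. DERIV (UB_exponent b) x :> y \<and> y \<ge> 0" by auto
qed

definition UB_denom :: "real \<Rightarrow> real \<Rightarrow> real" where
  "UB_denom b t = 1 - b / (3 * (t + b)) + b * sqrt (t / (t + b)) *
     (std_normal_cdf (sqrt (2 * UB_exponent b t)) / std_normal_density (sqrt (2 * UB_exponent b t)))"

lemma UB_eq_inverse_UB_denom:
  assumes b: "0 < b" and l: "0 < l"
  shows "UB b l = inverse (UB_denom b (sqrt l))"
proof -
  define t where "t = sqrt l"
  have t: "0 < t" using l by (simp add: t_def)
  then have tb: "0 < t + b" using b by simp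
  have l_eq: "l = t * t" using l by (simp add: t_def)
  have n_eq: "l + b * sqrt l = t * (t + b)"
    by (simp only: t_def[symmetric]) (simp add: l_eq algebra_simps)
  have rho_eq: "l / (t * (t + b)) = t / (t + b)" using t by (simp add: l_eq)
  have a_eq: "- 2 * (t * (t + b)) * (1 - t / (t + b) + ln (t / (t + b))) = 2 * UB_exponent b t"
    using t tb by (simp add: UB_exponent_def ln_div field_simps)
  have sqrt_n: "sqrt (t * (t + b)) = sqrt t * sqrt (t + b)"
    by (simp add: real_sqrt_mult)
  have gamma_eq: "(t * (t + b) - l) / sqrt (t * (t + b)) = b * sqrt (t / (t + b))"
  proof -
    have "t * (t + b) - l = b * (sqrt t * sqrt t)" using t by (simp add: l_eq algebra_simps)
    then show ?thesis using t tb unfolding sqrt_n by (simp add: real_sqrt_divide field_simps)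
  qed
  have "b * sqrt (t / (t + b)) * (2 / (3 * sqrt (t * (t + b))))
      = 2 * b / 3 * (sqrt (t / (t + b)) / sqrt (t * (t + b)))"
    by simp
  also have "sqrt (t / (t + b)) / sqrt (t * (t + b)) = sqrt ((1 / (t + b))\<^sup>2)"
    using t tb by (simp add: real_sqrt_divide[symmetric] power2_eq_square)
  also have "\<dots> = 1 / (t + b)" using tb by simp
  finally have "b * sqrt (t / (t + b)) * (2 / (3 * sqrt (t * (t + b)))) = 2 * b / (3 * (t + b))"
    by simp
  moreover have "t / (t + b) + 2 * b / (3 * (t + b)) = 1 - b / (3 * (t + b))"
    using tb by (simp add: divide_simps) (simp add: algebra_simps)
  ultimately show ?thesis
    unfolding UB_def Let_def n_eq rho_eq a_eq gamma_eq UB_denom_def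
    by (simp add: distrib_left algebra_simps t_def[symmetric])
qed

lemma UB_denom_pos:
  assumes "0 < t" "0 < b"
  shows "0 < UB_denom b t"
proof -
  have "b / (3 * (t + b)) < 1" using assms by (simp add: divide_simps)
  moreover have ratio: "0 \<le> b * sqrt (t / (t + b)) * (std_normal_cdf x / std_normal_density x)" for x
    using assms by (intro mult_nonneg_nonneg std_normal_cdf_div_density_nonneg) auto
  ultimately show ?thesis
    unfolding UB_denom_def using ratio[of "sqrt (2 * UB_exponent b t)"] by linarith
qed

lemma UB_denom_strict_mono:
  assumes "0 < t1" "t1 < t2" "0 < b"
  shows "UB_denom b t1 < UB_denom b t2"
proof -
  define a where "a t = sqrt (2 * UB_exponent b t)" for t
  have "b / (3 * (t2 + b)) < b / (3 * (t1 + b))"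
    using assms by (intro divide_strict_left_mono) auto
  moreover have "b * sqrt (t1 / (t1 + b)) * (std_normal_cdf (a t1) / std_normal_density (a t1))
      \<le> b * sqrt (t2 / (t2 + b)) * (std_normal_cdf (a t2) / std_normal_density (a t2))"
  proof (rule mult_mono)
    have "t1 * (t2 + b) \<le> t2 * (t1 + b)" using assms by (simp add: algebra_simps)
    then have "t1 / (t1 + b) \<le> t2 / (t2 + b)" using assms by (simp add: divide_simps)
    then show "b * sqrt (t1 / (t1 + b)) \<le> b * sqrt (t2 / (t2 + b))" using assms by simp
    have "0 \<le> UB_exponent b t1" "UB_exponent b t1 \<le> UB_exponent b t2"
      using UB_exponent_nonneg UB_exponent_mono assms by auto
    then show "std_normal_cdf (a t1) / std_normal_density (a t1)
        \<le> std_normal_cdf (a t2) / std_normal_density (a t2)"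
      unfolding a_def by (intro std_normal_cdf_div_density_mono) auto
    show "0 \<le> b * sqrt (t2 / (t2 + b))" using assms by simp
    show "0 \<le> std_normal_cdf (a t1) / std_normal_density (a t1)"
      by (rule std_normal_cdf_div_density_nonneg)
  qed
  ultimately show ?thesis unfolding UB_denom_def a_def by linarith
qed

theorem lemma1:
  fixes \<beta> :: real
  assumes "\<beta> > 0"
  shows "strict_antimono_on {0<..} (UB \<beta>)"
proof (rule monotone_onI)
  fix x y :: real assume "x \<in> {0<..}" "y \<in> {0<..}" "x < y"
  then have "0 < sqrt x" "sqrt x < sqrt y" by auto
  then have "inverse (UB_denom \<beta> (sqrt y)) < inverse (UB_denom \<beta> (sqrt x))"
    using assms by (intro less_imp_inverse_less UB_denom_strict_mono UB_denom_pos)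
  then show "UB \<beta> y < UB \<beta> x"
    using assms \<open>x \<in> {0<..}\<close> \<open>y \<in> {0<..}\<close> by (simp add: UB_eq_inverse_UB_denom)
qed

end
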